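(* Let $B^0=\bigcup_{n\in\mathbb{Z}}\{(n,k):\ k=0,1,\dots,2^{|n|}\}\subset\mathbb{H}$. Then $\bar{\mathcal H}_{B^0}(x)=0$ for all $x\in B^0$.
   Context: $\mathbb{H}=\{(x_1,x_2)\in\mathbb{Z}^2:\ x_2\ge 0\}$ and $L_n=\{(x_1,n):x_1\in\mathbb{Z}\}$. $(S_n)_{n\ge0}$ is a simple random walk on $\mathbb{Z}^2$; $P_z$ denotes its law started at $z$. For $A\subset\mathbb{Z}^2$, $\bar\tau_A=\min\{n\ge0: S_n\in A\}$. For $B\subset\mathbb{H}$, $x\in B$ and $N\ge1$, define $$\bar{\mathcal H}_{B,N}(x)=\sum_{z\in L_N\setminus B}P_z\big(S_{\bar\tau_{B\cup L_0}}=x\big).$$ It is known that the limit $\bar{\mathcal H}_B(x)=\lim_{N\to\infty}\bar{\mathcal H}_{B,N}(x)$ exists and is finite for every $B\subset\mathbb{H}$ and $x\in B$; it is called the stationary harmonic measure of $x$ with respect to $B$. *)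

theory Defs
  imports "HOL-Probability.Probability"
begin

definition srw_step :: "(int \<times> int) pmf" where
  "srw_step = pmf_of_set {(1,0), (-1,0), (0,1), (0,-1)}"

definition srw_space :: "(int \<times> int) stream measure" where
  "srw_space = stream_space (measure_pmf srw_step)"

definition walk :: "int \<times> int \<Rightarrow> (int \<times> int) stream \<Rightarrow> nat \<Rightarrow> int \<times> int" where
  "walk z w n = (fst z + sum_list (map fst (stake n w)), snd z + sum_list (map snd (stake n w)))"

text \<open>P_z(S_{tau_A} = x), tau_A = min{n >= 0. S_n in A} (event requires tau_A finite).\<close>
definition hit_prob :: "(int \<times> int) set \<Rightarrow> int \<times> int \<Rightarrow> int \<times> int \<Rightarrow> ennreal" where
  "hit_prob A z x = emeasure srw_space
     {w \<in> space srw_space. \<exists>n. walk z w n \<in> A \<and> (\<forall>m<n. walk z w m \<notin> A) \<and> walk z w n = x}"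

definition hline :: "int \<Rightarrow> (int \<times> int) set" where
  "hline n = {p. snd p = n}"

text \<open>bar H_{B,N}(x) = sum over z in L_N \ B of P_z(S_{tau_{B u L_0}} = x).\<close>
definition HBN :: "(int \<times> int) set \<Rightarrow> nat \<Rightarrow> int \<times> int \<Rightarrow> ennreal" where
  "HBN B N x = (\<Sum>\<^sub>\<infinity> z \<in> hline (int N) - B. hit_prob (B \<union> hline 0) z x)"

definition B0 :: "(int \<times> int) set" where
  "B0 = {(n, k). 0 \<le> k \<and> k \<le> 2 ^ nat \<bar>n\<bar>}"

end

(*
  Before a walk started on L_N outside B^0 can be absorbed at x = (a, b), it has to leave the
  part D of the strip b < k < 2N that lies outside B^0, either downwards or through the line
  k = 2N. Since 2^|n| < k < 2N on D, the strip D has width only O(log N), and a walk that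
  stays in such a narrow strip for N steps is very unlikely: a positive superharmonic barrier
  that is >= 1 on both boundary lines shows that the exit probability from height N is at most
  2A exp(-(N - b)/(A + 1)) with A of order (log N)^2. Summing over the at most 2N + 1 starting
  points of L_N outside B^0 still gives a bound tending to 0.
*)

theory Submission
  imports Defs "HOL-Real_Asymp.Real_Asymp"
begin

lemma walk_0 [simp]: "walk z w 0 = z"
  by (simp add: walk_def)

lemma walk_Suc: "walk z w (Suc m) = walk (z + shd w) (stl w) m"
  by (simp add: walk_def algebra_simps)

lemma space_srw_space [simp]: "space srw_space = UNIV"
  by (simp add: srw_space_def space_stream_space)

lemma sets_srw_space: "sets srw_space = sets (stream_space (count_space UNIV))"
  unfolding srw_space_def by (intro sets_stream_space_cong) simp

lemma measurable_walk [measurable]: "(\<lambda>w. walk z w n) \<in> measurable srw_space (count_space UNIV)"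
  unfolding walk_def by (simp add: measurable_cong_sets[OF sets_srw_space refl])

lemma emeasure_srw_space_le_1: "emeasure srw_space X \<le> 1"
  unfolding srw_space_def
  by (rule prob_space.emeasure_le_1[OF prob_space.prob_space_stream_space[OF prob_space_measure_pmf]])

lemma emeasure_srw_space_first_step:
  assumes "X \<in> sets srw_space"
  shows "emeasure srw_space X = (\<integral>\<^sup>+s. emeasure srw_space {w. s ## w \<in> X} \<partial>measure_pmf srw_step)"
  using prob_space.emeasure_stream_space[OF prob_space_measure_pmf assms[unfolded srw_space_def]]
  by (simp add: srw_space_def[symmetric])

lemma nn_integral_srw_step:
  "(\<integral>\<^sup>+s. f s \<partial>measure_pmf srw_step) = (f (1, 0) + f (-1, 0) + f (0, 1) + f (0, -1)) / 4"
  unfolding srw_step_def by (subst nn_integral_pmf_of_set) (auto simp: add_ac)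

definition reach_within ::
    "(int \<times> int) set \<Rightarrow> (int \<times> int) set \<Rightarrow> nat \<Rightarrow> int \<times> int \<Rightarrow> (int \<times> int) stream set"
  where
  "reach_within D T t z = {w. \<exists>j\<le>t. (\<forall>m<j. walk z w m \<in> D) \<and> walk z w j \<in> T}"

lemma sets_reach_within [measurable]: "reach_within D T t z \<in> sets srw_space"
proof -
  have "reach_within D T t z = {w \<in> space srw_space. \<exists>j\<le>t. (\<forall>m<j. walk z w m \<in> D) \<and> walk z w j \<in> T}"
    by (simp add: reach_within_def)
  also have "\<dots> \<in> sets srw_space" by measurable
  finally show ?thesis .
qed

lemma reach_within_mono: "t \<le> t' \<Longrightarrow> reach_within D T t z \<subseteq> reach_within D T t' z"
  by (auto simp: reach_within_def intro: order_trans)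

lemma reach_within_start_outside: "z \<notin> T \<Longrightarrow> z \<notin> D \<Longrightarrow> reach_within D T t z = {}"
  by (auto simp: reach_within_def) (metis gr0I walk_0)

lemma reach_within_0: "z \<notin> T \<Longrightarrow> reach_within D T 0 z = {}"
  by (simp add: reach_within_def)

lemma reach_within_Suc:
  assumes "z \<in> D" "z \<notin> T"
  shows "s ## w \<in> reach_within D T (Suc t) z \<longleftrightarrow> w \<in> reach_within D T t (z + s)"
proof
  assume "s ## w \<in> reach_within D T (Suc t) z"
  then obtain j where j: "j \<le> Suc t" "\<forall>m<j. walk z (s ## w) m \<in> D" "walk z (s ## w) j \<in> T"
    by (auto simp: reach_within_def)
  with assms obtain i where "j = Suc i" by (cases j) auto
  with j show "w \<in> reach_within D T t (z + s)"
    by (auto simp: reach_within_def walk_Suc intro!: exI[of _ i])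
next
  assume "w \<in> reach_within D T t (z + s)"
  then obtain i where i: "i \<le> t" "\<forall>m<i. walk (z + s) w m \<in> D" "walk (z + s) w i \<in> T"
    by (auto simp: reach_within_def)
  have "\<forall>m<Suc i. walk z (s ## w) m \<in> D"
    using i(2) assms(1) by (auto simp: less_Suc_eq_0_disj walk_Suc)
  with i show "s ## w \<in> reach_within D T (Suc t) z"
    by (auto simp: reach_within_def walk_Suc intro!: exI[of _ "Suc i"])
qed

lemma emeasure_reach_within_le:
  fixes G :: "int \<times> int \<Rightarrow> ennreal"
  assumes "\<And>z. z \<in> T \<Longrightarrow> 1 \<le> G z"
    and "\<And>z. z \<in> D \<Longrightarrow> z \<notin> T \<Longrightarrow> (\<integral>\<^sup>+s. G (z + s) \<partial>measure_pmf srw_step) \<le> G z"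
  shows "emeasure srw_space (reach_within D T t z) \<le> G z"
proof -
  have in_T: "emeasure srw_space (reach_within D T t z) \<le> G z" if "z \<in> T" for t z
    using emeasure_srw_space_le_1 assms(1)[OF that] by (rule order_trans)
  show ?thesis
  proof (induction t arbitrary: z)
    case 0
    show ?case using in_T by (cases "z \<in> T") (auto simp: reach_within_0)
  next
    case (Suc t)
    consider "z \<in> T" | "z \<notin> T" "z \<notin> D" | "z \<in> D" "z \<notin> T" by blast
    then show ?case
    proof cases
      case 1
      then show ?thesis by (rule in_T)
    next
      case 2
      then show ?thesis by (simp add: reach_within_start_outside)
    next
      case 3
      have "emeasure srw_space (reach_within D T (Suc t) z)
          = (\<integral>\<^sup>+s. emeasure srw_space (reach_within D T t (z + s)) \<partial>measure_pmf srw_step)"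
        using 3 by (simp add: emeasure_srw_space_first_step reach_within_Suc)
      also have "\<dots> \<le> (\<integral>\<^sup>+s. G (z + s) \<partial>measure_pmf srw_step)"
        by (intro nn_integral_mono Suc.IH)
      also have "\<dots> \<le> G z" using 3 by (rule assms(2))
      finally show ?thesis .
    qed
  qed
qed

lemma hit_prob_le_reach:
  assumes "x \<in> T" and "\<And>p. p \<notin> C \<Longrightarrow> p \<notin> D \<Longrightarrow> p \<in> T"
  shows "hit_prob C z x \<le> emeasure srw_space (\<Union>t. reach_within D T t z)"
  unfolding hit_prob_def
proof (intro emeasure_mono subsetI)
  fix w assume "w \<in> {w \<in> space srw_space. \<exists>n. walk z w n \<in> C \<and> (\<forall>m<n. walk z w m \<notin> C) \<and> walk z w n = x}"
  then obtain n where n: "\<forall>m<n. walk z w m \<notin> C" "walk z w n = x" by auto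
  show "w \<in> (\<Union>t. reach_within D T t z)"
  proof (cases "\<forall>m<n. walk z w m \<in> D")
    case True
    with n assms(1) show ?thesis by (auto simp: reach_within_def)
  next
    case False
    then obtain m where m: "m < n" "walk z w m \<notin> D" by blast
    define j where "j = (LEAST j. walk z w j \<notin> D)"
    have "walk z w j \<notin> D" using m(2) unfolding j_def by (rule LeastI)
    moreover have "j < n" unfolding j_def using m by (blast intro: le_less_trans[OF Least_le])
    ultimately have "walk z w j \<in> T" using n(1) assms(2) by blast
    moreover have "\<forall>i<j. walk z w i \<in> D" unfolding j_def using not_less_Least by blast
    ultimately have "w \<in> reach_within D T j z" by (auto simp: reach_within_def)
    then show ?thesis by blast
  qed
qed (auto intro: sets.countable_UN)

lemma hit_prob_le_superharmonic:
  fixes G :: "int \<times> int \<Rightarrow> ennreal"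
  assumes "x \<in> T" and "\<And>p. p \<notin> C \<Longrightarrow> p \<notin> D \<Longrightarrow> p \<in> T"
    and "\<And>z. z \<in> T \<Longrightarrow> 1 \<le> G z"
    and "\<And>z. z \<in> D \<Longrightarrow> z \<notin> T \<Longrightarrow> (\<integral>\<^sup>+s. G (z + s) \<partial>measure_pmf srw_step) \<le> G z"
  shows "hit_prob C z x \<le> G z"
proof -
  have "hit_prob C z x \<le> emeasure srw_space (\<Union>t. reach_within D T t z)"
    using assms(1,2) by (rule hit_prob_le_reach)
  also have "\<dots> = (SUP t. emeasure srw_space (reach_within D T t z))"
    by (rule SUP_emeasure_incseq[symmetric]) (auto simp: incseq_def reach_within_mono)
  also have "\<dots> \<le> G z"
    using assms(3,4) by (intro SUP_least emeasure_reach_within_le)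
  finally show ?thesis .
qed

(* Product of the parabola A - n^2, whose horizontal second difference is -2, and of
   q^(k-h) + q^(K-k) with q = A/(A+1), whose vertical second difference is only
   (q + 1/q - 2) = 1/(A(A+1)) times itself; the parabola wins as long as n^2 <= A. *)
definition strip_barrier :: "real \<Rightarrow> int \<Rightarrow> int \<Rightarrow> int \<times> int \<Rightarrow> real" where
  "strip_barrier A h K p =
     ((A / (A + 1)) powi (snd p - h) + (A / (A + 1)) powi (K - snd p)) * (A - of_int (fst p) ^ 2)"

lemma strip_barrier_superharmonic:
  assumes A: "0 < A" and n: "of_int n ^ 2 \<le> A"
  shows "strip_barrier A h K (n + 1, k) + strip_barrier A h K (n - 1, k)
       + strip_barrier A h K (n, k + 1) + strip_barrier A h K (n, k - 1)
       \<le> 4 * strip_barrier A h K (n, k)"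
proof -
  define q where "q = A / (A + 1)"
  define P where "P j = q powi (j - h) + q powi (K - j)" for j
  define c where "c = A - of_int n ^ 2"
  have q: "0 < q" using A by (simp add: q_def)
  have shift: "q powi (m + 1) = q * q powi m" "q powi (m - 1) = q powi m / q" for m :: int
    using q by (simp_all add: power_int_add_1' power_int_diff)
  have sb: "strip_barrier A h K (m, j) = P j * (A - of_int m ^ 2)" for m j
    by (simp add: strip_barrier_def P_def q_def)
  have exps: "k + 1 - h = (k - h) + 1" "K - (k + 1) = (K - k) - 1"
       "k - 1 - h = (k - h) - 1" "K - (k - 1) = (K - k) + 1" by simp_all
  have "P (k + 1) + P (k - 1) = (q + 1 / q) * P k"
    using q by (simp only: P_def exps shift) (simp add: field_simps)
  then have vertical:
    "strip_barrier A h K (n, k + 1) + strip_barrier A h K (n, k - 1) = (q + 1 / q) * P k * c"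
    by (simp add: sb c_def flip: distrib_right)
  have horizontal:
    "strip_barrier A h K (n + 1, k) + strip_barrier A h K (n - 1, k) = P k * (2 * c - 2)"
    by (simp add: sb c_def algebra_simps power2_eq_square)
  have "q + 1 / q - 2 = 1 / (A * (A + 1))"
  proof -
    have "A * (A + 1) \<noteq> 0" using A by simp
    then show ?thesis using A by (simp add: q_def field_simps)
  qed
  then have "c * (q + 1 / q - 2) = c / (A * (A + 1))" by simp
  also have "\<dots> \<le> A / (A * (A + 1))"
    using A by (intro divide_right_mono) (auto simp: c_def)
  also have "\<dots> = 1 / (A + 1)" using A by simp
  also have "\<dots> \<le> 2" using A by (simp add: divide_le_eq)
  finally have "c * (q + 1 / q - 2) \<le> 2" .
  moreover have "0 \<le> P k" using q by (simp add: P_def)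
  ultimately have "P k * (c * (q + 1 / q - 2) - 2) \<le> 0"
    by (simp add: mult_nonneg_nonpos)
  moreover have "(q + 1 / q) * P k * c + P k * (2 * c - 2) - 4 * (P k * c)
      = P k * (c * (q + 1 / q - 2) - 2)"
    by (simp add: algebra_simps)
  ultimately have "(q + 1 / q) * P k * c + P k * (2 * c - 2) \<le> 4 * (P k * c)"
    by linarith
  then show ?thesis
    using vertical horizontal by (simp add: sb c_def)
qed

lemma strip_barrier_nonneg: "0 < A \<Longrightarrow> of_int m ^ 2 \<le> A \<Longrightarrow> 0 \<le> strip_barrier A h K (m, j)"
  by (simp add: strip_barrier_def)

lemma strip_barrier_boundary_ge_1:
  assumes "0 < A" "1 + of_int m ^ 2 \<le> A" "j = h \<or> j = K"
  shows "1 \<le> strip_barrier A h K (m, j)"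
proof -
  have "1 \<le> (A / (A + 1)) powi (j - h) + (A / (A + 1)) powi (K - j)"
    using assms(1,3) by (auto intro: add_increasing add_increasing2 less_imp_le)
  then have "1 * 1 \<le> ((A / (A + 1)) powi (j - h) + (A / (A + 1)) powi (K - j)) * (A - of_int m ^ 2)"
    using assms(2) by (intro mult_mono) auto
  then show ?thesis by (simp add: strip_barrier_def)
qed

lemma hit_prob_le_strip_barrier:
  assumes narrow: "\<And>n k. (n, k) \<notin> C \<Longrightarrow> h < k \<Longrightarrow> k < K \<Longrightarrow> 1 + of_int (\<bar>n\<bar> + 1) ^ 2 \<le> A"
    and "snd x \<le> h" and z: "z \<notin> C" "h < snd z" "snd z < K"
  shows "hit_prob C z x \<le> ennreal (strip_barrier A h K z)"
proof -
  define D where "D = {p. p \<notin> C \<and> h < snd p \<and> snd p < K}"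
  define T where "T = {p :: int \<times> int. snd p \<le> h \<or> K \<le> snd p}"
  define G where "G p = (if p \<in> T then 1 else ennreal (strip_barrier A h K p))" for p
  have width: "1 + of_int m ^ 2 \<le> A" if "(n, k) \<in> D" "\<bar>m - n\<bar> \<le> 1" for n k m
  proof -
    have "of_int m ^ 2 \<le> (of_int (\<bar>n\<bar> + 1) :: real) ^ 2"
      using that(2) by (intro power2_le_iff_abs_le[THEN iffD2]) auto
    with narrow[of n k] that(1) show ?thesis by (auto simp: D_def)
  qed
  have "1 + of_int (fst z) ^ 2 \<le> A" using width[of "fst z" "snd z" "fst z"] z by (auto simp: D_def)
  then have A: "0 < A" using zero_le_power2[of "real_of_int (fst z)"] by linarith
  have G_le: "G (m, j) \<le> ennreal (strip_barrier A h K (m, j))"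
    if "1 + of_int m ^ 2 \<le> A" "h \<le> j" "j \<le> K" for m j
    using that strip_barrier_boundary_ge_1[OF A that(1), of j h K] by (auto simp: G_def T_def)
  have "(\<integral>\<^sup>+s. G (p + s) \<partial>measure_pmf srw_step) \<le> G p" if "p \<in> D" "p \<notin> T" for p
  proof -
    obtain n k where p: "p = (n, k)" by (cases p)
    let ?f = "strip_barrier A h K"
    have f_nonneg: "0 \<le> ?f (m, j)" if "\<bar>m - n\<bar> \<le> 1" for m j
      using strip_barrier_nonneg[OF A] width[OF \<open>p \<in> D\<close>[unfolded p] that] by simp
    have hk: "h < k" "k < K" using \<open>p \<in> D\<close> p by (auto simp: D_def)
    have "(\<integral>\<^sup>+s. G (p + s) \<partial>measure_pmf srw_step)
        = (G (n + 1, k) + G (n - 1, k) + G (n, k + 1) + G (n, k - 1)) / 4"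
      by (simp add: nn_integral_srw_step p)
    also have "\<dots> \<le> (ennreal (?f (n + 1, k)) + ennreal (?f (n - 1, k))
        + ennreal (?f (n, k + 1)) + ennreal (?f (n, k - 1))) / 4"
      using hk by (intro divide_right_mono_ennreal add_mono G_le width[OF \<open>p \<in> D\<close>[unfolded p]]) auto
    also have "\<dots> = ennreal ((?f (n + 1, k) + ?f (n - 1, k) + ?f (n, k + 1) + ?f (n, k - 1)) / 4)"
      using f_nonneg[of "n + 1" k] f_nonneg[of "n - 1" k] f_nonneg[of n "k + 1"] f_nonneg[of n "k - 1"]
      by (simp add: ennreal_plus divide_ennreal[symmetric])
    also have "\<dots> \<le> ennreal (?f (n, k))"
      using strip_barrier_superharmonic[OF A, of n h K k] width[OF \<open>p \<in> D\<close>[unfolded p], of n]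
      by (intro ennreal_leI) simp
    also have "\<dots> = G p" using \<open>p \<notin> T\<close> p by (simp add: G_def)
    finally show ?thesis .
  qed
  then have "hit_prob C z x \<le> G z"
    using \<open>snd x \<le> h\<close> by (intro hit_prob_le_superharmonic[of x T C D]) (auto simp: T_def D_def G_def)
  then show ?thesis using z by (simp add: G_def T_def)
qed

lemma powi_le_exp:
  fixes A :: real
  assumes "0 < A" "0 \<le> m"
  shows "(A / (A + 1)) powi m \<le> exp (- of_int m / (A + 1))"
proof -
  have "A + 1 \<noteq> 0" using assms(1) by simp
  then have "A / (A + 1) = 1 + (- 1 / (A + 1))" by (simp add: field_simps)
  also have "\<dots> \<le> exp (- 1 / (A + 1))" by (rule exp_ge_add_one_self)
  finally have "(A / (A + 1)) ^ nat m \<le> exp (- 1 / (A + 1)) ^ nat m"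
    using assms(1) by (intro power_mono) auto
  then show ?thesis
    using assms(2) by (simp add: power_int_nonneg_exp flip: exp_of_nat_mult)
qed

lemma strip_barrier_le_exp:
  assumes "0 < A" "h \<le> k" "k \<le> K"
  shows "strip_barrier A h K (n, k)
    \<le> A * (exp (- of_int (k - h) / (A + 1)) + exp (- of_int (K - k) / (A + 1)))"
proof -
  have "(A / (A + 1)) powi (k - h) + (A / (A + 1)) powi (K - k)
      \<le> exp (- of_int (k - h) / (A + 1)) + exp (- of_int (K - k) / (A + 1))"
    using assms by (intro add_mono powi_le_exp) auto
  moreover have "0 \<le> (A / (A + 1)) powi (k - h) + (A / (A + 1)) powi (K - k)"
    using assms(1) by simp
  ultimately show ?thesis
    unfolding strip_barrier_def using assms(1) by (simp add: mult.commute mult_mono)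
qed

definition B0_gap_bound :: "nat \<Rightarrow> real" where
  "B0_gap_bound N = (log 2 (2 * real N) + 2) ^ 2"

lemma B0_complement_narrow:
  assumes "(n, k) \<notin> B0" "0 \<le> k" "k < 2 * int N"
  shows "1 + of_int (\<bar>n\<bar> + 1) ^ 2 \<le> B0_gap_bound N"
proof -
  have "(2::int) ^ nat \<bar>n\<bar> < 2 * int N" using assms by (auto simp: B0_def)
  then have "real_of_int (2 ^ nat \<bar>n\<bar>) < real_of_int (2 * int N)"
    by (simp only: of_int_less_iff)
  then have "(2::real) ^ nat \<bar>n\<bar> < 2 * real N" by simp
  moreover have "(2::real) powr of_int \<bar>n\<bar> = 2 ^ nat \<bar>n\<bar>"
    by (simp add: powr_realpow[symmetric])
  ultimately have "2 powr of_int \<bar>n\<bar> < 2 * real N" by simp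
  moreover have N: "1 \<le> N" using assms(2,3) by linarith
  ultimately have n: "of_int \<bar>n\<bar> < log 2 (2 * real N)" by (simp add: less_log_iff)
  have L: "0 \<le> log 2 (2 * real N)" using N by simp
  have "of_int (\<bar>n\<bar> + 1) ^ 2 \<le> (log 2 (2 * real N) + 1) ^ 2"
    using n by (intro power_mono) auto
  moreover have "1 + (log 2 (2 * real N) + 1) ^ 2 \<le> (log 2 (2 * real N) + 2) ^ 2"
    using L by (simp add: power2_eq_square algebra_simps)
  ultimately show ?thesis unfolding B0_gap_bound_def by linarith
qed

definition B0_hit_bound :: "int \<Rightarrow> nat \<Rightarrow> real" where
  "B0_hit_bound b N = B0_gap_bound N *
     (exp (- (real N - of_int b) / (B0_gap_bound N + 1)) + exp (- real N / (B0_gap_bound N + 1)))"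

lemma hit_prob_B0_le:
  assumes "x \<in> B0" "snd x < int N" "z \<in> hline (int N) - B0"
  shows "hit_prob (B0 \<union> hline 0) z x \<le> ennreal (B0_hit_bound (snd x) N)"
proof -
  define A where "A = B0_gap_bound N"
  obtain n where z: "z = (n, int N)" "(n, int N) \<notin> B0"
    using assms(3) by (cases z) (auto simp: hline_def)
  have x: "0 \<le> snd x" using assms(1) by (auto simp: B0_def)
  have narrow: "1 + of_int (\<bar>m\<bar> + 1) ^ 2 \<le> A"
    if "(m, k) \<notin> B0 \<union> hline 0" "snd x < k" "k < 2 * int N" for m k
    using B0_complement_narrow[of m k N] that x unfolding A_def by auto
  have "1 + of_int (\<bar>n\<bar> + 1) ^ 2 \<le> A"
    using narrow[of n "int N"] z assms(2) x by (auto simp: hline_def)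
  then have "0 < A" using zero_le_power2[of "real_of_int (\<bar>n\<bar> + 1)"] by linarith
  have "hit_prob (B0 \<union> hline 0) z x \<le> ennreal (strip_barrier A (snd x) (2 * int N) z)"
    using z assms(2) x by (intro hit_prob_le_strip_barrier narrow) (auto simp: hline_def)
  also have "\<dots> \<le> ennreal (B0_hit_bound (snd x) N)"
    using strip_barrier_le_exp[OF \<open>0 < A\<close>, of "snd x" "int N" "2 * int N" n] z assms(2)
    by (intro ennreal_leI) (simp add: B0_hit_bound_def A_def)
  finally show ?thesis .
qed

lemma hline_minus_B0_subset: "hline (int N) - B0 \<subseteq> (\<lambda>n. (n, int N)) ` {- int N..int N}"
proof
  fix z assume z: "z \<in> hline (int N) - B0"
  then obtain n where n: "z = (n, int N)" "(n, int N) \<notin> B0"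
    by (cases z) (auto simp: hline_def)
  then have "(2::int) ^ nat \<bar>n\<bar> < int N" by (simp add: B0_def not_le)
  moreover have "int (nat \<bar>n\<bar>) < int (2 ^ nat \<bar>n\<bar>)"
    by (simp only: of_nat_less_iff less_exp)
  then have "\<bar>n\<bar> < (2::int) ^ nat \<bar>n\<bar>" by simp
  ultimately have "\<bar>n\<bar> < int N" by linarith
  then have "n \<in> {- int N..int N}" by auto
  with n(1) show "z \<in> (\<lambda>n. (n, int N)) ` {- int N..int N}" by blast
qed

lemma finite_hline_minus_B0: "finite (hline (int N) - B0)"
  by (rule finite_subset[OF hline_minus_B0_subset]) simp

lemma card_hline_minus_B0_le: "card (hline (int N) - B0) \<le> 2 * N + 1"
proof -
  have "card (hline (int N) - B0) \<le> card ((\<lambda>n. (n, int N)) ` {- int N..int N})"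
    by (rule card_mono[OF _ hline_minus_B0_subset]) simp
  also have "\<dots> \<le> card {- int N..int N}" by (rule card_image_le) simp
  finally show ?thesis by simp
qed

lemma HBN_B0_le:
  assumes "x \<in> B0" "snd x < int N"
  shows "HBN B0 N x \<le> ennreal ((2 * real N + 1) * B0_hit_bound (snd x) N)"
proof -
  let ?c = "B0_hit_bound (snd x) N"
  have "0 \<le> ?c" by (simp add: B0_hit_bound_def B0_gap_bound_def)
  have "HBN B0 N x = (\<Sum>z \<in> hline (int N) - B0. hit_prob (B0 \<union> hline 0) z x)"
    unfolding HBN_def using finite_hline_minus_B0 by simp
  also have "\<dots> \<le> (\<Sum>z \<in> hline (int N) - B0. ennreal ?c)"
    using assms by (intro sum_mono hit_prob_B0_le)
  also have "\<dots> = ennreal (real (card (hline (int N) - B0)) * ?c)"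
    using \<open>0 \<le> ?c\<close> by (simp add: ennreal_mult' ennreal_of_nat_eq_real_of_nat)
  also have "\<dots> \<le> ennreal ((2 * real N + 1) * ?c)"
    using card_hline_minus_B0_le[of N] \<open>0 \<le> ?c\<close>
    by (intro ennreal_leI mult_right_mono) (auto simp flip: of_nat_le_iff)
  finally show ?thesis .
qed

lemma B0_hit_bound_tendsto_0: "(\<lambda>N. (2 * real N + 1) * B0_hit_bound b N) \<longlonglongrightarrow> 0"
proof -
  have "((\<lambda>y. (2 * y + 1) * ((log 2 (2 * y) + 2) ^ 2
      * (exp (- (y - of_int b) / ((log 2 (2 * y) + 2) ^ 2 + 1))
         + exp (- y / ((log 2 (2 * y) + 2) ^ 2 + 1))))) \<longlongrightarrow> 0) at_top"
    by real_asymp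
  then show ?thesis
    unfolding B0_hit_bound_def B0_gap_bound_def
    by (rule filterlim_compose[OF _ filterlim_real_sequentially])
qed

theorem mainTheorem2:
  assumes "x \<in> B0"
  shows "((\<lambda>N. HBN B0 N x) \<longlongrightarrow> 0) sequentially"
proof (rule tendsto_sandwich[of "\<lambda>_. 0"])
  show "eventually (\<lambda>N. HBN B0 N x \<le> ennreal ((2 * real N + 1) * B0_hit_bound (snd x) N)) sequentially"
  proof (rule eventually_sequentiallyI)
    fix N assume "Suc (nat (snd x)) \<le> N"
    then have "snd x < int N" by linarith
    then show "HBN B0 N x \<le> ennreal ((2 * real N + 1) * B0_hit_bound (snd x) N)"
      by (rule HBN_B0_le[OF assms])
  qed
  show "(\<lambda>N. ennreal ((2 * real N + 1) * B0_hit_bound (snd x) N)) \<longlonglongrightarrow> 0"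
    using tendsto_ennrealI[OF B0_hit_bound_tendsto_0] by simp
qed simp_all

end
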